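(* Let $R$ be a commutative ring with unit, $Q=(V,E,X,s,t,l)$ a labelled quiver, and let $f,g,h\in R\langle X\rangle$ be such that $f$ is compatible with $Q$, $g$ is uniformly compatible with $Q$, and $h$ can be obtained from $f$ by a rewriting step using $g$, i.e. $h=f+\lambda agb$ for some $\lambda\in R$ and $a,b\in\langle X\rangle$ with $a m_g b = m_f$ for some $m_g\in\operatorname{supp}(g)$, $m_f\in\operatorname{supp}(f)$. Then $h$ is compatible, $a$, $b$ and $agb$ are uniformly compatible with $Q$, and $\sigma(h)\supseteq\sigma(f)$ and $\sigma(agb)\supseteq\sigma(f)$. Moreover, if in addition $f$ is uniformly compatible, then $h$ is uniformly compatible and $\sigma(agb)=\sigma(f)$.
   Context: $R\langle X\rangle$ is the free algebra of noncommutative polynomials over $R$ in indeterminates $X$, with monomials the words in $\langle X\rangle$ (including the empty word $1$); $\operatorname{supp}(f)$ is the set of monomials with nonzero coefficient. A rewriting step: for $f,g$ such that some $m_g\in\operatorname{supp}(g)$ divides some $m_f\in\operatorname{supp}(f)$, i.e. $m_f=am_gb$ with $a,b\in\langle X\rangle$, and $\lambda\in R$, the polynomial $f+\lambda agb$ is obtained from $f$ by a rewriting step using $g$. A labelled quiver $Q=(V,E,X,s,t,l)$ has vertices $V$, edges $E$, source/target maps $s,t:E\to V$ and labelling $l:E\to X$. A nonempty path $p=e_n\cdots e_1$ (with $s(e_{i+1})=t(e_i)$) has label $l(e_n)\cdots l(e_1)$, source $s(e_1)$, target $t(e_n)$; each vertex $v$ has an empty path with label $1$ and source and target $v$. For a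 monomial $m$, $\sigma(m)=\{(s(p),t(p)) : p \text{ a path with } l(p)=m\}$; for a polynomial $f$, $\sigma(f)=\bigcap_{m\in\operatorname{supp}(f)}\sigma(m)$. $f$ is compatible with $Q$ if $\sigma(f)\neq\emptyset$, and uniformly compatible if it is compatible and all $m\in\operatorname{supp}(f)$ have the same set $\sigma(m)$. *)

theory Defs
  imports Main
begin

text \<open>Noncommutative polynomials over a commutative ring 'r in indeterminates of type 'x
  are represented as finitely supported functions from words ('x list, the empty list being
  the empty word 1) to coefficients.\<close>

definition supp :: "('x list \<Rightarrow> 'r::zero) \<Rightarrow> 'x list set" where
  "supp f = {m. f m \<noteq> 0}"

definition ncpoly :: "('x list \<Rightarrow> 'r::zero) \<Rightarrow> bool" where
  "ncpoly f \<longleftrightarrow> finite (supp f)"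

definition monom_poly :: "'x list \<Rightarrow> 'x list \<Rightarrow> 'r::{zero,one}" where
  "monom_poly m = (\<lambda>w. if w = m then 1 else 0)"

definition lrmul :: "'x list \<Rightarrow> ('x list \<Rightarrow> 'r::comm_ring_1) \<Rightarrow> 'x list \<Rightarrow> 'x list \<Rightarrow> 'r" where
  "lrmul a g b = (\<lambda>w. \<Sum>v\<in>supp g. if a @ v @ b = w then g v else 0)"

text \<open>Labelled quiver (V,E,X,s,t,l): vertices V, edges E, s,t : E \<rightarrow> V, labels l : E \<rightarrow> X
  (X is the type 'x).\<close>
definition quiver :: "'v set \<Rightarrow> 'e set \<Rightarrow> ('e \<Rightarrow> 'v) \<Rightarrow> ('e \<Rightarrow> 'v) \<Rightarrow> bool" where
  "quiver V E s t \<longleftrightarrow> (\<forall>e\<in>E. s e \<in> V \<and> t e \<in> V)"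

text \<open>A nonempty path e_n \<cdots> e_1 is the list [e_n, ..., e_1]; consecutive condition
  s(e_{i+1}) = t(e_i). Its label is map l p, source s(e_1) = s (last p), target t(e_n) = t (hd p).\<close>
definition ne_path :: "'e set \<Rightarrow> ('e \<Rightarrow> 'v) \<Rightarrow> ('e \<Rightarrow> 'v) \<Rightarrow> 'e list \<Rightarrow> bool" where
  "ne_path E s t p \<longleftrightarrow> p \<noteq> [] \<and> set p \<subseteq> E \<and>
     (\<forall>i. Suc i < length p \<longrightarrow> s (p ! i) = t (p ! Suc i))"

definition sigma_mon :: "'v set \<Rightarrow> 'e set \<Rightarrow> ('e \<Rightarrow> 'v) \<Rightarrow> ('e \<Rightarrow> 'v) \<Rightarrow> ('e \<Rightarrow> 'x)
    \<Rightarrow> 'x list \<Rightarrow> ('v \<times> 'v) set" where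
  "sigma_mon V E s t l m =
     {(v, v) | v. v \<in> V \<and> m = []} \<union>
     {(s (last p), t (hd p)) | p. ne_path E s t p \<and> map l p = m}"

definition sigma_poly :: "'v set \<Rightarrow> 'e set \<Rightarrow> ('e \<Rightarrow> 'v) \<Rightarrow> ('e \<Rightarrow> 'v) \<Rightarrow> ('e \<Rightarrow> 'x)
    \<Rightarrow> ('x list \<Rightarrow> 'r::zero) \<Rightarrow> ('v \<times> 'v) set" where
  "sigma_poly V E s t l f = (\<Inter>m\<in>supp f. sigma_mon V E s t l m)"

definition compatible where
  "compatible V E s t l f \<longleftrightarrow> sigma_poly V E s t l f \<noteq> {}"

definition unif_compatible where
  "unif_compatible V E s t l f \<longleftrightarrow> compatible V E s t l f \<and>
     (\<forall>m\<in>supp f. \<forall>m'\<in>supp f. sigma_mon V E s t l m = sigma_mon V E s t l m')"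

end

(* Under \<sigma>, concatenation of words becomes composition of relations:
   \<sigma>(m1 m2) = \<sigma>(m2) O \<sigma>(m1). Hence every monomial a v b of agb, v \<in> supp g, has
   \<sigma>(a v b) = \<sigma>(a mg b) = \<sigma>(mf), because g is uniformly compatible; and \<sigma>(mf) contains
   \<sigma>(f), which is nonempty, so \<sigma>(a) and \<sigma>(b) are nonempty as well. Since
   supp h \<subseteq> supp f \<union> supp (agb), we get \<sigma>(h) \<supseteq> \<sigma>(f) \<inter> \<sigma>(agb) = \<sigma>(f); if f is also
   uniform, all monomials of h have the same \<sigma> = \<sigma>(mf) = \<sigma>(f). *)
theory Submission
  imports Defs
begin

lemma successively_iff_nth:
  "successively P xs \<longleftrightarrow> (\<forall>i. Suc i < length xs \<longrightarrow> P (xs ! i) (xs ! Suc i))"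
  by (induction P xs rule: successively.induct) (auto simp: nth_Cons split: nat.split)

lemma ne_path_iff_successively:
  "ne_path E s t p \<longleftrightarrow> p \<noteq> [] \<and> set p \<subseteq> E \<and> successively (\<lambda>e e'. s e = t e') p"
  by (simp add: ne_path_def successively_iff_nth)

lemma ne_path_append_iff:
  assumes "p \<noteq> []" "q \<noteq> []"
  shows "ne_path E s t (p @ q) \<longleftrightarrow>
    ne_path E s t p \<and> ne_path E s t q \<and> s (last p) = t (hd q)"
  using assms by (auto simp: ne_path_iff_successively successively_append_iff)

lemma sigma_mon_Nil: "sigma_mon V E s t l [] = Id_on V"
  by (auto simp: sigma_mon_def ne_path_def)

lemma sigma_mon_nonempty:
  "m \<noteq> [] \<Longrightarrow>
    sigma_mon V E s t l m = {(s (last p), t (hd p)) | p. ne_path E s t p \<and> map l p = m}"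
  by (auto simp: sigma_mon_def)

lemma sigma_mon_subset_vertices:
  assumes "quiver V E s t"
  shows "sigma_mon V E s t l m \<subseteq> V \<times> V"
  using assms by (force simp: sigma_mon_def quiver_def ne_path_def)

text \<open>Paths are written right to left, so a path labelled m1 m2 first follows m2 and then m1.\<close>
lemma sigma_mon_append:
  assumes "quiver V E s t"
  shows "sigma_mon V E s t l (m1 @ m2) = sigma_mon V E s t l m2 O sigma_mon V E s t l m1"
proof (cases "m1 = [] \<or> m2 = []")
  case True
  then show ?thesis
    using sigma_mon_subset_vertices[OF assms, of l] by (auto simp: sigma_mon_Nil) blast+
next
  case False
  then have ne: "m1 \<noteq> []" "m2 \<noteq> []" by auto
  show ?thesis
  proof (intro set_eqI iffI)
    fix xz assume "xz \<in> sigma_mon V E s t l (m1 @ m2)"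
    then obtain p where p: "ne_path E s t p" "map l p = m1 @ m2" "xz = (s (last p), t (hd p))"
      using ne by (auto simp: sigma_mon_nonempty)
    then obtain p1 p2 where p12: "p = p1 @ p2" "map l p1 = m1" "map l p2 = m2"
      by (auto simp: map_eq_append_conv)
    with ne have "p1 \<noteq> []" "p2 \<noteq> []" by auto
    with p p12 show "xz \<in> sigma_mon V E s t l m2 O sigma_mon V E s t l m1"
      using ne by (force simp: sigma_mon_nonempty ne_path_append_iff)
  next
    fix xz assume "xz \<in> sigma_mon V E s t l m2 O sigma_mon V E s t l m1"
    then obtain x y z where xz: "xz = (x, z)"
      and "(x, y) \<in> sigma_mon V E s t l m2" "(y, z) \<in> sigma_mon V E s t l m1"
      by blast
    then obtain p1 p2 where
      p1: "ne_path E s t p1" "map l p1 = m1" and p2: "ne_path E s t p2" "map l p2 = m2"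
      and join: "s (last p1) = t (hd p2)" and xz: "xz = (s (last p2), t (hd p1))"
      using ne by (auto simp: sigma_mon_nonempty)
    have "p1 \<noteq> []" "p2 \<noteq> []"
      using p1 p2 by (auto simp: ne_path_def)
    moreover have "ne_path E s t (p1 @ p2)"
      using p1 p2 join calculation by (simp add: ne_path_append_iff)
    ultimately show "xz \<in> sigma_mon V E s t l (m1 @ m2)"
      using p1 p2 xz ne by (auto simp: sigma_mon_nonempty intro!: exI[of _ "p1 @ p2"])
  qed
qed

lemma sigma_mon_append_nonempty:
  assumes "quiver V E s t" and "sigma_mon V E s t l (m1 @ m2) \<noteq> {}"
  shows "sigma_mon V E s t l m1 \<noteq> {}" and "sigma_mon V E s t l m2 \<noteq> {}"
  using assms(2) unfolding sigma_mon_append[OF assms(1)] by auto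

lemma supp_monom_poly: "supp (monom_poly a :: 'x list \<Rightarrow> 'r::zero_neq_one) = {a}"
  by (auto simp: supp_def monom_poly_def)

lemma lrmul_append:
  assumes "finite (supp g)"
  shows "lrmul a g b (a @ v @ b) = g v"
proof -
  have "lrmul a g b (a @ v @ b) = (\<Sum>v'\<in>supp g. if v' = v then g v' else 0)"
    unfolding lrmul_def by (rule sum.cong) auto
  also have "\<dots> = (if v \<in> supp g then g v else 0)"
    using assms by simp
  also have "\<dots> = g v"
    by (simp add: supp_def)
  finally show ?thesis .
qed

lemma supp_lrmul:
  assumes "finite (supp g)"
  shows "supp (lrmul a g b) = (\<lambda>v. a @ v @ b) ` supp g"
proof (intro set_eqI iffI)
  fix w assume w: "w \<in> supp (lrmul a g b)"
  show "w \<in> (\<lambda>v. a @ v @ b) ` supp g"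
  proof (rule ccontr)
    assume "w \<notin> (\<lambda>v. a @ v @ b) ` supp g"
    then have "lrmul a g b w = 0"
      unfolding lrmul_def by (intro sum.neutral) auto
    with w show False
      by (simp add: supp_def)
  qed
next
  fix w assume "w \<in> (\<lambda>v. a @ v @ b) ` supp g"
  then show "w \<in> supp (lrmul a g b)"
    using lrmul_append[OF assms] by (auto simp: supp_def)
qed

lemma supp_add_scaled_subset:
  "supp (\<lambda>w. f w + c * g w :: 'r::semiring_0) \<subseteq> supp f \<union> supp g"
  by (auto simp: supp_def)

lemma sigma_poly_subset_sigma_mon:
  "m \<in> supp f \<Longrightarrow> sigma_poly V E s t l f \<subseteq> sigma_mon V E s t l m"
  by (auto simp: sigma_poly_def)

lemma sigma_poly_add_scaled:
  "sigma_poly V E s t l f \<inter> sigma_poly V E s t l g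
    \<subseteq> sigma_poly V E s t l (\<lambda>w. f w + c * g w :: 'r::semiring_0)"
  unfolding sigma_poly_def using supp_add_scaled_subset[of f c g] by blast

lemma sigma_poly_eq_if_uniform:
  "m \<in> supp f \<Longrightarrow> \<forall>m'\<in>supp f. sigma_mon V E s t l m' = S \<Longrightarrow> sigma_poly V E s t l f = S"
  by (auto simp: sigma_poly_def)

lemma unif_compatibleI:
  assumes "\<forall>m\<in>supp f. sigma_mon V E s t l m = S" and "S \<noteq> {}"
  shows "unif_compatible V E s t l f"
proof -
  have "S \<subseteq> sigma_poly V E s t l f"
    using assms(1) by (auto simp: sigma_poly_def)
  with assms show ?thesis
    by (auto simp: unif_compatible_def compatible_def)
qed

lemma sigma_poly_unif_compatible:
  "unif_compatible V E s t l f \<Longrightarrow> m \<in> supp f \<Longrightarrow> sigma_poly V E s t l f = sigma_mon V E s t l m"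
  unfolding unif_compatible_def by (metis sigma_poly_eq_if_uniform)

lemma unif_compatible_add_scaled:
  assumes "unif_compatible V E s t l f" and "unif_compatible V E s t l g"
    and "sigma_poly V E s t l f = sigma_poly V E s t l g"
  shows "unif_compatible V E s t l (\<lambda>w. f w + c * g w :: 'r::semiring_0)"
proof (rule unif_compatibleI)
  show "\<forall>m\<in>supp (\<lambda>w. f w + c * g w). sigma_mon V E s t l m = sigma_poly V E s t l f"
  proof
    fix m assume "m \<in> supp (\<lambda>w. f w + c * g w)"
    then consider "m \<in> supp f" | "m \<in> supp g"
      using supp_add_scaled_subset[of f c g] by blast
    then show "sigma_mon V E s t l m = sigma_poly V E s t l f"
      using sigma_poly_unif_compatible[OF assms(1)] sigma_poly_unif_compatible[OF assms(2)]
        assms(3) by cases simp_all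
  qed
  show "sigma_poly V E s t l f \<noteq> {}"
    using assms(1) unfolding unif_compatible_def compatible_def by blast
qed

lemma unif_compatible_monom_poly_iff:
  "unif_compatible V E s t l (monom_poly a :: 'x list \<Rightarrow> 'r::zero_neq_one)
    \<longleftrightarrow> sigma_mon V E s t l a \<noteq> {}"
  by (simp add: unif_compatible_def compatible_def sigma_poly_def supp_monom_poly)

lemma sigma_mon_supp_lrmul:
  assumes "quiver V E s t" and "finite (supp g)"
    and "unif_compatible V E s t l g" and "mg \<in> supp g"
    and "m \<in> supp (lrmul a g b)"
  shows "sigma_mon V E s t l m = sigma_mon V E s t l (a @ mg @ b)"
proof -
  obtain v where v: "v \<in> supp g" and m: "m = a @ v @ b"
    using assms(5) supp_lrmul[OF assms(2)] by blast
  have "sigma_mon V E s t l v = sigma_mon V E s t l mg"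
    using assms(3,4) v unfolding unif_compatible_def by blast
  then show ?thesis
    using m by (simp add: sigma_mon_append[OF assms(1)])
qed

lemma sigma_poly_lrmul:
  assumes "quiver V E s t" and "finite (supp g)"
    and "unif_compatible V E s t l g" and "mg \<in> supp g"
  shows "sigma_poly V E s t l (lrmul a g b) = sigma_mon V E s t l (a @ mg @ b)"
proof (rule sigma_poly_eq_if_uniform)
  show "a @ mg @ b \<in> supp (lrmul a g b)"
    using supp_lrmul[OF assms(2)] assms(4) by blast
  show "\<forall>m\<in>supp (lrmul a g b). sigma_mon V E s t l m = sigma_mon V E s t l (a @ mg @ b)"
    using sigma_mon_supp_lrmul[OF assms] by blast
qed

lemma unif_compatible_lrmul:
  assumes "quiver V E s t" and "finite (supp g)"
    and "unif_compatible V E s t l g" and "mg \<in> supp g"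
    and "sigma_mon V E s t l (a @ mg @ b) \<noteq> {}"
  shows "unif_compatible V E s t l (lrmul a g b)"
  using sigma_mon_supp_lrmul[OF assms(1-4)] assms(5) by (intro unif_compatibleI) auto

theorem lemma3p10:
  fixes V :: "'v set" and E :: "'e set" and s t :: "'e \<Rightarrow> 'v" and l :: "'e \<Rightarrow> 'x"
    and f g h :: "'x list \<Rightarrow> 'r::comm_ring_1"
    and lam :: 'r and a b mg mf :: "'x list"
  assumes "quiver V E s t"
    and "ncpoly f" and "ncpoly g"
    and "compatible V E s t l f"
    and "unif_compatible V E s t l g"
    and "mg \<in> supp g" and "mf \<in> supp f" and "a @ mg @ b = mf"
    and "h = (\<lambda>w. f w + lam * lrmul a g b w)"
  shows "compatible V E s t l h
      \<and> unif_compatible V E s t l (monom_poly a :: 'x list \<Rightarrow> 'r)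
      \<and> unif_compatible V E s t l (monom_poly b :: 'x list \<Rightarrow> 'r)
      \<and> unif_compatible V E s t l (lrmul a g b)
      \<and> sigma_poly V E s t l f \<subseteq> sigma_poly V E s t l h
      \<and> sigma_poly V E s t l f \<subseteq> sigma_poly V E s t l (lrmul a g b)
      \<and> (unif_compatible V E s t l f \<longrightarrow>
           unif_compatible V E s t l h
           \<and> sigma_poly V E s t l (lrmul a g b) = sigma_poly V E s t l f)"
proof -
  let ?S = "sigma_mon V E s t l mf" and ?L = "lrmul a g b :: 'x list \<Rightarrow> 'r"
  have fin_g: "finite (supp g)"
    using assms(3) by (simp add: ncpoly_def)
  have sigma_L: "sigma_poly V E s t l ?L = ?S"
    using sigma_poly_lrmul[OF assms(1) fin_g assms(5,6)] assms(8) by simp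
  have f_sub: "sigma_poly V E s t l f \<subseteq> ?S"
    using assms(7) by (rule sigma_poly_subset_sigma_mon)
  with assms(4) have S_nonempty: "?S \<noteq> {}"
    by (auto simp: compatible_def)
  then have "sigma_mon V E s t l a \<noteq> {}" "sigma_mon V E s t l b \<noteq> {}"
    using sigma_mon_append_nonempty[OF assms(1), of l a "mg @ b"]
      sigma_mon_append_nonempty[OF assms(1), of l "a @ mg" b] assms(8) by auto
  moreover have unif_L: "unif_compatible V E s t l ?L"
    using unif_compatible_lrmul[OF assms(1) fin_g assms(5,6)] S_nonempty assms(8) by simp
  moreover have h_sub: "sigma_poly V E s t l f \<subseteq> sigma_poly V E s t l h"
    using sigma_poly_add_scaled[of V E s t l f ?L lam] f_sub sigma_L assms(9) by blast
  moreover have "unif_compatible V E s t l h \<and> sigma_poly V E s t l f = ?S"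
    if "unif_compatible V E s t l f"
  proof
    show sigma_f: "sigma_poly V E s t l f = ?S"
      using that assms(7) by (rule sigma_poly_unif_compatible)
    show "unif_compatible V E s t l h"
      unfolding assms(9) using that unif_L
      by (rule unif_compatible_add_scaled) (simp add: sigma_f sigma_L)
  qed
  moreover have "compatible V E s t l h"
    using assms(4) h_sub unfolding compatible_def by blast
  ultimately show ?thesis
    using f_sub sigma_L by (simp add: unif_compatible_monom_poly_iff)
qed

end
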